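(* Let $F$ be a graph of diameter $2$, $n=|V(F)|$, $t=\delta(F)$ with $t\ge 2$, and let $l>n$ be an integer. Then $\delta_i<\delta_l$ for every $i\in\{l+1,l+2,\dots,l+t-1\}$.
   Context: All graphs are simple, finite, undirected. The $F$-degree of a vertex $v$ in $G$ is the number of subgraphs of $G$ (not necessarily induced) isomorphic to $F$ and containing $v$. $A_{2l-1}$ is the graph with vertex set $\{1,\dots,2l-1\}$ in which distinct $i,j$ are adjacent iff $|i-j|\le l-1$; $F_{2l}$ is obtained from $A_{2l-1}$ by adding a new vertex $2l$ joined exactly to $1,\dots,t$. $z_i$ is the $F$-degree of $i$ in $A_{2l-1}$, $f_i$ the $F$-degree of $i$ in $F_{2l}$, and $\delta_i=f_i-z_i$. *)

theory Defs
  imports Main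
begin

type_synonym 'a graph = "'a set \<times> 'a set set"

definition simple_graph :: "'a graph \<Rightarrow> bool" where
  "simple_graph G \<longleftrightarrow> finite (fst G) \<and>
     (\<forall>e\<in>snd G. \<exists>x y. x \<in> fst G \<and> y \<in> fst G \<and> x \<noteq> y \<and> e = {x, y})"

definition adj :: "'a graph \<Rightarrow> 'a \<Rightarrow> 'a \<Rightarrow> bool" where
  "adj G x y \<longleftrightarrow> {x, y} \<in> snd G"

definition degree :: "'a graph \<Rightarrow> 'a \<Rightarrow> nat" where
  "degree G v = card {u \<in> fst G. adj G v u}"

definition min_degree :: "'a graph \<Rightarrow> nat" where
  "min_degree G = Min (degree G ` fst G)"

definition is_walk :: "'a graph \<Rightarrow> 'a list \<Rightarrow> bool" where
  "is_walk G p \<longleftrightarrow> p \<noteq> [] \<and> set p \<subseteq> fst G \<and>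
     (\<forall>i < length p - 1. adj G (p ! i) (p ! Suc i))"

definition walk_between :: "'a graph \<Rightarrow> 'a \<Rightarrow> 'a \<Rightarrow> nat \<Rightarrow> bool" where
  "walk_between G u v k \<longleftrightarrow> (\<exists>p. is_walk G p \<and> hd p = u \<and> last p = v \<and> length p = Suc k)"

definition connected_graph :: "'a graph \<Rightarrow> bool" where
  "connected_graph G \<longleftrightarrow> fst G \<noteq> {} \<and> (\<forall>u\<in>fst G. \<forall>v\<in>fst G. \<exists>k. walk_between G u v k)"

definition graph_dist :: "'a graph \<Rightarrow> 'a \<Rightarrow> 'a \<Rightarrow> nat" where
  "graph_dist G u v = (LEAST k. walk_between G u v k)"

definition has_diameter :: "'a graph \<Rightarrow> nat \<Rightarrow> bool" where
  "has_diameter G d \<longleftrightarrow> connected_graph G \<and>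
     Max {graph_dist G u v | u v. u \<in> fst G \<and> v \<in> fst G} = d"

definition subgraph :: "'a graph \<Rightarrow> 'a graph \<Rightarrow> bool" where
  "subgraph H G \<longleftrightarrow> fst H \<subseteq> fst G \<and> snd H \<subseteq> snd G \<and> (\<forall>e\<in>snd H. e \<subseteq> fst H)"

definition isomorphic :: "'a graph \<Rightarrow> 'b graph \<Rightarrow> bool" where
  "isomorphic G H \<longleftrightarrow> (\<exists>f. bij_betw f (fst G) (fst H) \<and>
     (\<forall>x\<in>fst G. \<forall>y\<in>fst G. adj G x y \<longleftrightarrow> adj H (f x) (f y)))"

definition F_degree :: "'b graph \<Rightarrow> 'a graph \<Rightarrow> 'a \<Rightarrow> nat" where
  "F_degree F G v = card {H. subgraph H G \<and> isomorphic H F \<and> v \<in> fst H}"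

definition A_graph :: "nat \<Rightarrow> nat graph" where
  "A_graph l = ({1..2*l-1}, {{i, j} | i j. i \<in> {1..2*l-1} \<and> j \<in> {1..2*l-1} \<and> i \<noteq> j
                   \<and> (i - j \<le> l - 1 \<and> j - i \<le> l - 1)})"

definition F_graph :: "nat \<Rightarrow> nat \<Rightarrow> nat graph" where
  "F_graph l t = ({1..2*l}, snd (A_graph l) \<union> {{2*l, j} | j. j \<in> {1..t}})"

end

theory Submission
  imports Defs "HOL-Combinatorics.Transposition"
begin

(* In F_l the new vertex 2l is adjacent exactly to 1, ..., t, so delta_x counts the copies of F
   through x and 2l.  For l < i < 2l, swapping i and l sends a copy through i and 2l that avoids l
   to a copy through l and 2l: l is adjacent in A_{2l-1} to every other vertex, and the edges at 2l
   are untouched.  Keeping the copies that already contain l, this is an injection, and it misses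
   any copy through l and 2l that avoids i and uses the edge {l, 1}, since swapping back would need
   the edge {i, 1} of length i - 1 >= l.  Such a copy exists: by diameter 2 there is a vertex v of
   minimum degree t and a path v - u - w with w not adjacent to v; send v to 2l, the neighbours of v
   onto 1, ..., t with u to 1, w to l, and the remaining n - t - 2 vertices into t + 1, ..., l - 1. *)

definition map_graph :: "('a \<Rightarrow> 'b) \<Rightarrow> 'a graph \<Rightarrow> 'b graph" where
  "map_graph f G = (f ` fst G, image f ` snd G)"

lemma map_graph_comp: "map_graph g (map_graph f G) = map_graph (g \<circ> f) G"
  by (simp add: map_graph_def image_comp)

lemma map_graph_id [simp]: "map_graph id G = G"
  by (simp add: map_graph_def)

lemma isomorphic_trans:
  assumes "isomorphic G H" and "isomorphic H K"
  shows "isomorphic G K"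
proof -
  obtain f where f: "bij_betw f (fst G) (fst H)"
    "\<forall>x\<in>fst G. \<forall>y\<in>fst G. adj G x y \<longleftrightarrow> adj H (f x) (f y)"
    using assms(1) unfolding isomorphic_def by blast
  obtain g where g: "bij_betw g (fst H) (fst K)"
    "\<forall>x\<in>fst H. \<forall>y\<in>fst H. adj H x y \<longleftrightarrow> adj K (g x) (g y)"
    using assms(2) unfolding isomorphic_def by blast
  have "bij_betw (g \<circ> f) (fst G) (fst K)"
    using f(1) g(1) by (rule bij_betw_trans)
  moreover have "adj G x y \<longleftrightarrow> adj K ((g \<circ> f) x) ((g \<circ> f) y)"
    if "x \<in> fst G" "y \<in> fst G" for x y
    using f(2) g(2) bij_betw_apply[OF f(1)] that by simp
  ultimately show ?thesis
    unfolding isomorphic_def by blast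
qed

lemma isomorphic_map_graph:
  assumes inj: "inj_on f (fst G)" and edges: "\<forall>e\<in>snd G. e \<subseteq> fst G"
  shows "isomorphic (map_graph f G) G"
proof -
  have "adj (map_graph f G) (f x) (f y) \<longleftrightarrow> adj G x y" if "x \<in> fst G" "y \<in> fst G" for x y
  proof
    assume "adj (map_graph f G) (f x) (f y)"
    then have "f ` {x, y} \<in> image f ` snd G"
      by (simp add: adj_def map_graph_def)
    then obtain e where e: "e \<in> snd G" "f ` {x, y} = f ` e"
      by blast
    have "{x, y} \<subseteq> fst G" "e \<subseteq> fst G"
      using that edges e(1) by auto
    then have "{x, y} = e"
      using inj_on_image_eq_iff[OF inj] e(2) by blast
    then show "adj G x y"
      using e(1) by (simp add: adj_def)
  next
    assume "adj G x y"
    then have "{x, y} \<in> snd G"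
      by (simp add: adj_def)
    then have "f ` {x, y} \<in> image f ` snd G"
      by (rule imageI)
    then show "adj (map_graph f G) (f x) (f y)"
      by (simp add: adj_def map_graph_def)
  qed
  then have "adj (map_graph f G) x' y' \<longleftrightarrow> adj G (inv_into (fst G) f x') (inv_into (fst G) f y')"
    if "x' \<in> fst (map_graph f G)" "y' \<in> fst (map_graph f G)" for x' y'
    using that inv_into_f_f[OF inj] by (auto simp: map_graph_def)
  moreover have "bij_betw (inv_into (fst G) f) (fst (map_graph f G)) (fst G)"
    using inj by (simp add: map_graph_def bij_betw_inv_into inj_on_imp_bij_betw)
  ultimately show ?thesis
    unfolding isomorphic_def by blast
qed

lemma subgraph_map_graph:
  assumes "\<forall>e\<in>snd G. e \<subseteq> fst G" and "f ` fst G \<subseteq> fst K" and "\<forall>e\<in>snd G. f ` e \<in> snd K"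
  shows "subgraph (map_graph f G) K"
  using assms unfolding subgraph_def map_graph_def by (simp add: image_subset_iff) blast

lemma finite_subgraphs:
  assumes "finite (fst G)"
  shows "finite {H. subgraph H G \<and> P H}"
proof (rule finite_subset)
  show "{H. subgraph H G \<and> P H} \<subseteq> Pow (fst G) \<times> Pow (Pow (fst G))"
    by (fastforce simp: subgraph_def)
qed (use assms in simp)

lemma fst_A_graph [simp]: "fst (A_graph l) = {1..2*l-1}"
  by (simp add: A_graph_def)

lemma fst_F_graph [simp]: "fst (F_graph l t) = {1..2*l}"
  by (simp add: F_graph_def)

lemma snd_F_graph: "snd (F_graph l t) = snd (A_graph l) \<union> {{2*l, j} | j. j \<in> {1..t}}"
  by (simp add: F_graph_def)

lemma A_graph_edge_doubleton: "e \<in> snd (A_graph l) \<Longrightarrow> \<exists>a b. e = {a, b}"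
  by (auto simp: A_graph_def)

lemma doubleton_in_A_graph_iff:
  "{a, b} \<in> snd (A_graph l) \<longleftrightarrow>
     a \<noteq> b \<and> a \<in> {1..2*l-1} \<and> b \<in> {1..2*l-1} \<and> a - b < l \<and> b - a < l"
proof
  assume "{a, b} \<in> snd (A_graph l)"
  then obtain i j where "{a, b} = {i, j}" "i \<in> {1..2*l-1}" "j \<in> {1..2*l-1}" "i \<noteq> j"
      "i - j \<le> l - 1" "j - i \<le> l - 1"
    by (auto simp: A_graph_def)
  moreover from this have "a = i \<and> b = j \<or> a = j \<and> b = i"
    by (simp add: doubleton_eq_iff)
  ultimately show "a \<noteq> b \<and> a \<in> {1..2*l-1} \<and> b \<in> {1..2*l-1} \<and> a - b < l \<and> b - a < l"
    by auto
next
  assume ab: "a \<noteq> b \<and> a \<in> {1..2*l-1} \<and> b \<in> {1..2*l-1} \<and> a - b < l \<and> b - a < l"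
  then have "a - b \<le> l - 1" "b - a \<le> l - 1"
    by linarith+
  with ab show "{a, b} \<in> snd (A_graph l)"
    unfolding A_graph_def snd_conv by blast
qed

lemma apex_edge_in_F_graph: "j \<in> {1..t} \<Longrightarrow> {2*l, j} \<in> snd (F_graph l t)"
  by (auto simp: snd_F_graph)

lemma low_edge_in_F_graph:
  assumes "a \<noteq> b" "a \<in> {1..l}" "b \<in> {1..l}"
  shows "{a, b} \<in> snd (F_graph l t)"
  using assms by (auto simp: snd_F_graph doubleton_in_A_graph_iff)

lemma subgraph_A_graph_iff:
  assumes "0 < l"
  shows "subgraph H (A_graph l) \<longleftrightarrow> subgraph H (F_graph l t) \<and> 2*l \<notin> fst H"
proof
  assume H: "subgraph H (A_graph l)"
  have "{1..2*l-1} \<subseteq> {1..2*l}" "2*l \<notin> {1..2*l-1}"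
    using assms by auto
  moreover have "snd (A_graph l) \<subseteq> snd (F_graph l t)"
    by (simp add: snd_F_graph)
  ultimately show "subgraph H (F_graph l t) \<and> 2*l \<notin> fst H"
    using H unfolding subgraph_def fst_A_graph fst_F_graph by blast
next
  assume H: "subgraph H (F_graph l t) \<and> 2*l \<notin> fst H"
  have "x \<in> {1..2*l-1}" if "x \<in> fst H" for x
  proof -
    have "x \<in> {1..2*l}" "x \<noteq> 2*l"
      using H that by (auto simp: subgraph_def)
    then show ?thesis
      by auto
  qed
  moreover have "e \<in> snd (A_graph l)" if "e \<in> snd H" for e
  proof -
    have "e \<in> snd (F_graph l t)" "2*l \<notin> e"
      using H that by (auto simp: subgraph_def)
    then show ?thesis
      by (auto simp: snd_F_graph)
  qed
  ultimately show "subgraph H (A_graph l)"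
    using H by (auto simp: subgraph_def)
qed

definition apex_copies :: "'b graph \<Rightarrow> nat \<Rightarrow> nat \<Rightarrow> nat \<Rightarrow> nat graph set" where
  "apex_copies F l t x =
     {H. subgraph H (F_graph l t) \<and> isomorphic H F \<and> x \<in> fst H \<and> 2*l \<in> fst H}"

lemma finite_apex_copies: "finite (apex_copies F l t x)"
  unfolding apex_copies_def by (rule finite_subgraphs) simp

lemma F_degree_F_graph:
  assumes "0 < l"
  shows "F_degree F (F_graph l t) x = F_degree F (A_graph l) x + card (apex_copies F l t x)"
proof -
  let ?C = "{H. subgraph H (F_graph l t) \<and> isomorphic H F \<and> x \<in> fst H}"
  let ?apex = "{H. 2*l \<in> fst H}"
  have "card ?C = card (?C \<inter> ?apex) + card (?C - ?apex)"
    by (rule card_Int_Diff) (rule finite_subgraphs, simp)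
  moreover have "?C \<inter> ?apex = apex_copies F l t x"
    by (auto simp: apex_copies_def)
  moreover have "?C - ?apex = {H. subgraph H (A_graph l) \<and> isomorphic H F \<and> x \<in> fst H}"
    using subgraph_A_graph_iff[OF assms] by blast
  ultimately show ?thesis
    by (simp add: F_degree_def)
qed

lemma A_graph_edge_to_middle:
  assumes "c \<in> {1..2*l-1}" and "c \<noteq> l"
  shows "{l, c} \<in> snd (A_graph l)"
  using assms by (simp add: doubleton_in_A_graph_iff) linarith

lemma transpose_F_graph_edge:
  assumes "t < l" "l < i" "i < 2*l"
    and e: "e \<in> snd (F_graph l t)" and "l \<notin> e"
  shows "transpose i l ` e \<in> snd (F_graph l t)"
proof (cases "i \<in> e")
  case False
  then show ?thesis
    using e \<open>l \<notin> e\<close> by simp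
next
  case True
  have "e \<notin> {{2*l, j} | j. j \<in> {1..t}}"
    using True assms(1-3) by auto
  then have "e \<in> snd (A_graph l)"
    using e unfolding snd_F_graph by blast
  then obtain c where c: "e = {i, c}"
    using True A_graph_edge_doubleton by blast
  then have "c \<noteq> i" "c \<noteq> l" "c \<in> {1..2*l-1}"
    using \<open>e \<in> snd (A_graph l)\<close> \<open>l \<notin> e\<close> by (auto simp: doubleton_in_A_graph_iff)
  then have "transpose i l ` e \<in> snd (A_graph l)"
    using c A_graph_edge_to_middle by simp
  then show ?thesis
    by (simp add: snd_F_graph)
qed

lemma transpose_apex_copy:
  assumes "t < l" "l < i" "i < 2*l"
    and H: "H \<in> apex_copies F l t i" and "l \<notin> fst H"
  shows "map_graph (transpose i l) H \<in> apex_copies F l t l"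
proof -
  have sub: "subgraph H (F_graph l t)" and iso: "isomorphic H F"
    and "i \<in> fst H" "2*l \<in> fst H"
    using H by (auto simp: apex_copies_def)
  have edges: "\<forall>e\<in>snd H. e \<subseteq> fst H"
    using sub by (simp add: subgraph_def)
  have "transpose i l ` fst H \<subseteq> {1..2*l}"
    using sub assms(2,3) by (auto simp: subgraph_def transpose_def)
  moreover have "\<forall>e\<in>snd H. transpose i l ` e \<in> snd (F_graph l t)"
    using sub edges \<open>l \<notin> fst H\<close>
    by (auto intro: transpose_F_graph_edge[OF assms(1-3)] simp: subgraph_def)
  ultimately have "subgraph (map_graph (transpose i l) H) (F_graph l t)"
    using edges by (intro subgraph_map_graph) simp_all
  moreover have "isomorphic (map_graph (transpose i l) H) F"
    using isomorphic_map_graph[OF inj_on_transpose edges] iso by (rule isomorphic_trans)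
  moreover have "l \<in> transpose i l ` fst H"
    using \<open>i \<in> fst H\<close> by (intro image_eqI[where x = i]) simp_all
  moreover have "2*l \<in> transpose i l ` fst H"
    using \<open>2*l \<in> fst H\<close> assms(2,3) by (intro image_eqI[where x = "2*l"]) simp_all
  ultimately show ?thesis
    by (simp add: apex_copies_def map_graph_def)
qed

lemma long_edge_to_1_notin_F_graph:
  assumes "l < i" "i < 2*l"
  shows "{i, 1} \<notin> snd (F_graph l t)"
  using assms by (auto simp: snd_F_graph doubleton_in_A_graph_iff doubleton_eq_iff)

lemma transpose_back_not_apex_copy:
  assumes "l < i" "i < 2*l" and "{l, 1} \<in> snd H0"
  shows "map_graph (transpose i l) H0 \<notin> apex_copies F l t i"
proof
  assume "map_graph (transpose i l) H0 \<in> apex_copies F l t i"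
  have "transpose i l ` {l, 1} = {i, 1}"
    using assms(1,2) by (auto simp: transpose_def)
  moreover have "transpose i l ` {l, 1} \<in> snd (map_graph (transpose i l) H0)"
    using assms(3) unfolding map_graph_def snd_conv by (rule imageI)
  ultimately have "{i, 1} \<in> snd (F_graph l t)"
    using \<open>map_graph (transpose i l) H0 \<in> apex_copies F l t i\<close>
    by (auto simp: apex_copies_def subgraph_def)
  then show False
    using long_edge_to_1_notin_F_graph[OF assms(1,2)] by blast
qed

lemma card_apex_copies_less:
  assumes "t < l" "l < i" "i < 2*l"
    and H0: "H0 \<in> apex_copies F l t l" "i \<notin> fst H0" "{l, 1} \<in> snd H0"
  shows "card (apex_copies F l t i) < card (apex_copies F l t l)"
proof -
  let ?swap = "map_graph (transpose i l)"
  define move where "move H = (if l \<in> fst H then H else ?swap H)" for H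
  have swap_swap: "?swap (?swap H) = H" for H
    by (simp add: map_graph_comp)
  have i_notin_swap: "i \<notin> fst (?swap H)" if "l \<notin> fst H" for H
    using that by (auto simp: map_graph_def transpose_def)
  have i_in: "i \<in> fst H" if "H \<in> apex_copies F l t i" for H
    using that by (simp add: apex_copies_def)
  have "move H \<in> apex_copies F l t l" if "H \<in> apex_copies F l t i" for H
  proof (cases "l \<in> fst H")
    case True
    then show ?thesis
      using that by (simp add: move_def apex_copies_def)
  next
    case False
    then show ?thesis
      using transpose_apex_copy[OF assms(1-3) that] by (simp add: move_def)
  qed
  then have "move ` apex_copies F l t i \<subseteq> apex_copies F l t l"
    by blast
  moreover have "H0 \<notin> move ` apex_copies F l t i"
  proof
    assume "H0 \<in> move ` apex_copies F l t i"
    then obtain H where H: "H \<in> apex_copies F l t i" "H0 = move H"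
      by blast
    have "l \<notin> fst H"
      using H(2) H0(2) i_in[OF H(1)] by (auto simp: move_def split: if_splits)
    then have "H = ?swap H0"
      using H(2) swap_swap by (simp add: move_def)
    then show False
      using H(1) transpose_back_not_apex_copy[OF assms(2,3) H0(3), of F t] by simp
  qed
  ultimately have "move ` apex_copies F l t i \<subset> apex_copies F l t l"
    using H0(1) by blast
  then have "card (move ` apex_copies F l t i) < card (apex_copies F l t l)"
    by (rule psubset_card_mono[OF finite_apex_copies])
  moreover have "inj_on move (apex_copies F l t i)"
    by (rule inj_onI) (metis move_def swap_swap i_notin_swap i_in)
  ultimately show ?thesis
    by (simp add: card_image)
qed

lemma adj_commute: "adj G x y \<longleftrightarrow> adj G y x"
  by (simp add: adj_def insert_commute)

lemma simple_graph_edgeE: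
  assumes "simple_graph G" and "e \<in> snd G"
  obtains x y where "x \<in> fst G" "y \<in> fst G" "x \<noteq> y" "e = {x, y}"
  using assms by (auto simp: simple_graph_def)

lemma simple_graph_edges_subset: "simple_graph G \<Longrightarrow> \<forall>e\<in>snd G. e \<subseteq> fst G"
  by (auto simp: simple_graph_def)

lemma simple_graph_adjD:
  assumes "simple_graph G" and "adj G x y"
  shows "x \<in> fst G" "y \<in> fst G" "x \<noteq> y"
proof -
  obtain a b where "a \<in> fst G" "b \<in> fst G" "a \<noteq> b" "{x, y} = {a, b}"
    using assms simple_graph_edgeE[of G "{x, y}"] by (auto simp: adj_def)
  then show "x \<in> fst G" "y \<in> fst G" "x \<noteq> y"
    by (auto simp: doubleton_eq_iff)
qed

lemma degree_add_2_le_card: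
  assumes "simple_graph G" and "x \<in> fst G" "y \<in> fst G" and "x \<noteq> y" and "\<not> adj G x y"
  shows "degree G x + 2 \<le> card (fst G)"
proof -
  have fin: "finite (fst G)"
    using assms(1) by (simp add: simple_graph_def)
  have "{u \<in> fst G. adj G x u} \<subseteq> fst G - {x, y}"
    using assms(5) by (auto dest: simple_graph_adjD(3)[OF assms(1)])
  then have "degree G x \<le> card (fst G - {x, y})"
    unfolding degree_def using fin by (intro card_mono) simp_all
  also have "\<dots> = card (fst G) - 2"
    using assms(2-4) fin by (simp add: card_Diff_subset)
  finally show ?thesis
    using assms(2-4) fin card_mono[of "fst G" "{x, y}"] by simp
qed

lemma min_degree_le: "finite (fst G) \<Longrightarrow> x \<in> fst G \<Longrightarrow> min_degree G \<le> degree G x"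
  by (simp add: min_degree_def)

lemma min_degree_attained:
  assumes "finite (fst G)" and "fst G \<noteq> {}"
  obtains v where "v \<in> fst G" "degree G v = min_degree G"
proof -
  have "min_degree G \<in> degree G ` fst G"
    unfolding min_degree_def using assms by (intro Min_in) simp_all
  then show thesis
    using that by (metis imageE)
qed

lemma walk_between_le_2:
  assumes "walk_between G x y k" and "k \<le> 2"
  shows "x = y \<or> adj G x y \<or> (\<exists>u\<in>fst G. adj G x u \<and> adj G u y)"
proof -
  obtain p where p: "is_walk G p" "hd p = x" "last p = y" "length p = Suc k"
    using assms(1) unfolding walk_between_def by blast
  then have steps: "\<And>j. j < k \<Longrightarrow> adj G (p ! j) (p ! Suc j)" and "set p \<subseteq> fst G"
    by (auto simp: is_walk_def)
  have "p \<noteq> []"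
    using p(4) by auto
  then have "p ! 0 = x" "p ! k = y"
    using p by (auto simp: hd_conv_nth last_conv_nth)
  have "k = 0 \<or> k = 1 \<or> k = 2"
    using assms(2) by auto
  then show ?thesis
  proof (elim disjE)
    assume "k = 0"
    then show ?thesis
      using \<open>p ! 0 = x\<close> \<open>p ! k = y\<close> by simp
  next
    assume "k = 1"
    then show ?thesis
      using steps[of 0] \<open>p ! 0 = x\<close> \<open>p ! k = y\<close> by simp
  next
    assume "k = 2"
    then have "p ! 1 \<in> fst G"
      using \<open>set p \<subseteq> fst G\<close> p(4) by auto
    moreover have "adj G x (p ! 1)" "adj G (p ! 1) y"
      using steps[of 0] steps[of 1] \<open>p ! 0 = x\<close> \<open>p ! k = y\<close> \<open>k = 2\<close>
      by (simp_all add: numeral_2_eq_2)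
    ultimately show ?thesis
      by blast
  qed
qed

lemma finite_graph_dists:
  "finite (fst G) \<Longrightarrow> finite {graph_dist G u v | u v. u \<in> fst G \<and> v \<in> fst G}"
  using finite_image_set2[of "\<lambda>u. u \<in> fst G" "\<lambda>v. v \<in> fst G" "graph_dist G"] by simp

lemma has_diameter_dist_le:
  assumes "has_diameter G d" and "finite (fst G)" and "x \<in> fst G" "y \<in> fst G"
  shows "graph_dist G x y \<le> d"
proof -
  have "graph_dist G x y \<in> {graph_dist G u v | u v. u \<in> fst G \<and> v \<in> fst G}"
    using assms(3,4) by blast
  then have "graph_dist G x y \<le> Max {graph_dist G u v | u v. u \<in> fst G \<and> v \<in> fst G}"
    by (rule Max_ge[OF finite_graph_dists[OF assms(2)]])
  then show ?thesis
    using assms(1) by (simp add: has_diameter_def)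
qed

lemma graph_dist_le: "walk_between G x y k \<Longrightarrow> graph_dist G x y \<le> k"
  unfolding graph_dist_def by (rule Least_le)

lemma connected_graph_walk_dist:
  assumes "connected_graph G" and "x \<in> fst G" "y \<in> fst G"
  shows "walk_between G x y (graph_dist G x y)"
proof -
  have "\<exists>k. walk_between G x y k"
    using assms unfolding connected_graph_def by blast
  then show ?thesis
    unfolding graph_dist_def by (rule LeastI_ex)
qed

lemma has_diameter_2_common_neighbour:
  assumes "has_diameter G 2" and "finite (fst G)"
    and "x \<in> fst G" "y \<in> fst G" "x \<noteq> y" "\<not> adj G x y"
  obtains u where "u \<in> fst G" "adj G x u" "adj G u y"
proof -
  have "walk_between G x y (graph_dist G x y)"
    using assms(1,3,4) by (intro connected_graph_walk_dist) (simp_all add: has_diameter_def)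
  then have "x = y \<or> adj G x y \<or> (\<exists>u\<in>fst G. adj G x u \<and> adj G u y)"
    using has_diameter_dist_le[OF assms(1-4)] by (rule walk_between_le_2)
  then show thesis
    using assms(5,6) that by blast
qed

lemma has_diameter_2_non_adjacent:
  assumes "has_diameter G 2" and "finite (fst G)"
  obtains x y where "x \<in> fst G" "y \<in> fst G" "x \<noteq> y" "\<not> adj G x y"
proof -
  have "fst G \<noteq> {}"
    using assms(1) by (simp add: has_diameter_def connected_graph_def)
  then have "Max {graph_dist G u v | u v. u \<in> fst G \<and> v \<in> fst G}
      \<in> {graph_dist G u v | u v. u \<in> fst G \<and> v \<in> fst G}"
    by (intro Max_in[OF finite_graph_dists[OF assms(2)]]) blast
  then have "2 \<in> {graph_dist G u v | u v. u \<in> fst G \<and> v \<in> fst G}"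
    using assms(1) by (simp only: has_diameter_def)
  then obtain x y where xy: "x \<in> fst G" "y \<in> fst G" "graph_dist G x y = 2"
    by auto
  moreover have "x \<noteq> y"
  proof
    assume "x = y"
    then have "walk_between G x y 0"
      using xy(1) unfolding walk_between_def is_walk_def by (intro exI[of _ "[x]"]) simp
    from graph_dist_le[OF this] show False
      using xy(3) by simp
  qed
  moreover have "\<not> adj G x y"
  proof
    assume "adj G x y"
    then have "walk_between G x y 1"
      using xy(1,2) unfolding walk_between_def is_walk_def by (intro exI[of _ "[x, y]"]) simp
    from graph_dist_le[OF this] show False
      using xy(3) by simp
  qed
  ultimately show thesis
    using that by blast
qed

lemma min_degree_vertex_non_adjacent:
  assumes "simple_graph G" and "has_diameter G 2"
  obtains v w where "v \<in> fst G" "degree G v = min_degree G" "w \<in> fst G" "w \<noteq> v" "\<not> adj G v w"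
proof -
  have fin: "finite (fst G)"
    using assms(1) by (simp add: simple_graph_def)
  obtain x y where xy: "x \<in> fst G" "y \<in> fst G" "x \<noteq> y" "\<not> adj G x y"
    using has_diameter_2_non_adjacent[OF assms(2) fin] .
  obtain v where v: "v \<in> fst G" "degree G v = min_degree G"
    using min_degree_attained[OF fin] xy(1) by blast
  have "\<exists>w\<in>fst G. w \<noteq> v \<and> \<not> adj G v w"
  proof (rule ccontr)
    assume "\<not> ?thesis"
    then have "fst G - {v} \<subseteq> {u \<in> fst G. adj G v u}"
      by blast
    then have "card (fst G - {v}) \<le> degree G v"
      unfolding degree_def using fin by (intro card_mono) simp_all
    moreover have "card (fst G - {v}) = card (fst G) - 1"
      using v(1) fin by simp
    moreover have "degree G v \<le> degree G x"
      using v(2) min_degree_le[OF fin xy(1)] by simp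
    ultimately show False
      using degree_add_2_le_card[OF assms(1) xy] by linarith
  qed
  then show thesis
    using that v by blast
qed

lemma min_degree_add_2_le_card:
  assumes "simple_graph G" and "has_diameter G 2"
  shows "min_degree G + 2 \<le> card (fst G)"
proof -
  obtain v w where "v \<in> fst G" "degree G v = min_degree G" "w \<in> fst G" "w \<noteq> v" "\<not> adj G v w"
    using min_degree_vertex_non_adjacent[OF assms] .
  then show ?thesis
    using degree_add_2_le_card[OF assms(1)] by metis
qed

lemma card_le_inj_with_value:
  assumes "finite A" "finite B" "card A \<le> card B" "a \<in> A" "b \<in> B"
  obtains f where "inj_on f A" "f ` A \<subseteq> B" "f a = b"
proof -
  obtain f where f: "f ` A \<subseteq> B" "inj_on f A"
    using card_le_inj[OF assms(1-3)] by blast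
  have "f a \<in> B"
    using f(1) assms(4) by blast
  then have "(transpose (f a) b \<circ> f) ` A \<subseteq> B"
    using f(1) assms(5) by (auto simp: transpose_def)
  moreover have "inj_on (transpose (f a) b \<circ> f) A"
    using f(2) by (simp add: inj_on_transpose comp_inj_on)
  ultimately show thesis
    using that by simp
qed

lemma subgraph_F_graph_map_graph:
  assumes G: "simple_graph G" and v: "v \<in> fst G"
    and inj: "inj_on g (fst G)" and "0 < l" and gv: "g v = 2*l"
    and nbrs: "\<And>x. adj G v x \<Longrightarrow> g x \<in> {1..t}"
    and others: "g ` (fst G - {v}) \<subseteq> {1..l}"
  shows "subgraph (map_graph g G) (F_graph l t)"
proof (rule subgraph_map_graph)
  show "\<forall>e\<in>snd G. e \<subseteq> fst G"
    using G by (rule simple_graph_edges_subset)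
  have "g x \<in> {1..2*l}" if "x \<in> fst G" for x
  proof (cases "x = v")
    case False
    then have "g x \<in> {1..l}"
      using others that by blast
    then show ?thesis
      by auto
  qed (use gv \<open>0 < l\<close> in simp)
  then show "g ` fst G \<subseteq> fst (F_graph l t)"
    by auto
  have "g ` e \<in> snd (F_graph l t)" if e: "e \<in> snd G" for e
  proof -
    obtain x y where xy: "x \<in> fst G" "y \<in> fst G" "x \<noteq> y" "e = {x, y}"
      using simple_graph_edgeE[OF G e] .
    then have "adj G x y"
      using e by (simp add: adj_def)
    consider "x = v" | "y = v" | "x \<noteq> v" "y \<noteq> v"
      by blast
    then show ?thesis
    proof cases
      case 1
      then show ?thesis
        using nbrs[of y] \<open>adj G x y\<close> gv xy(4) by (simp add: apex_edge_in_F_graph)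
    next
      case 2
      then have "g ` e = {2*l, g x}"
        using gv xy(4) by auto
      then show ?thesis
        using 2 nbrs[of x] \<open>adj G x y\<close> by (simp add: apex_edge_in_F_graph adj_commute)
    next
      case 3
      then show ?thesis
        using others xy inj_onD[OF inj] by (auto intro!: low_edge_in_F_graph)
    qed
  qed
  then show "\<forall>e\<in>snd G. g ` e \<in> snd (F_graph l t)"
    by blast
qed

lemma inj_on_fun_upd_insert:
  assumes "inj_on h A" and "a \<notin> A" and "b \<notin> h ` A"
  shows "inj_on (h(a := b)) (insert a A)"
  using assms by (auto simp: inj_on_def)

lemma inj_labelling:
  assumes fin: "finite V" and v: "v \<in> V" and N: "N \<subseteq> V - {v}" "card N = t" "u \<in> N"
    and w: "w \<in> V - insert v N" and size: "card V \<le> l + 1"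
  obtains g where "inj_on g V" "g v = 2*l" "g ` N \<subseteq> {1..t}" "g ` (V - {v}) \<subseteq> {1..l}"
    "g u = 1" "g w = l"
proof -
  define R where "R = V - insert v N"
  have "finite N" "finite R" "v \<notin> N"
    using fin N(1) by (auto simp: R_def intro: finite_subset)
  have "insert v N \<subseteq> V"
    using N(1) v by auto
  then have "card R = card V - card (insert v N)"
    unfolding R_def using \<open>finite N\<close> by (simp add: card_Diff_subset)
  also have "card (insert v N) = Suc t"
    using \<open>finite N\<close> \<open>v \<notin> N\<close> N(2) by simp
  finally have "card R = card V - Suc t" .
  moreover have "0 < card R"
    using \<open>finite R\<close> w by (auto simp: R_def card_gt_0_iff)
  ultimately have "t < l" "card R \<le> card {t+1..l}"
    using size by auto
  then obtain f2 where f2: "inj_on f2 R" "f2 ` R \<subseteq> {t+1..l}" "f2 w = l"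
    using card_le_inj_with_value[of R "{t+1..l}" w l] \<open>finite R\<close> w by (auto simp: R_def)
  have "0 < t"
    using N(2,3) \<open>finite N\<close> card_gt_0_iff by blast
  then obtain f1 where f1: "inj_on f1 N" "f1 ` N \<subseteq> {1..t}" "f1 u = 1"
    using card_le_inj_with_value[of N "{1..t}" u 1] \<open>finite N\<close> N(2,3) by auto
  define h where "h x = (if x \<in> N then f1 x else f2 x)" for x
  define g where "g = h(v := 2*l)"
  have "f1 ` N \<inter> f2 ` R = {}"
    using f1(2) f2(2) by fastforce
  then have inj_h: "inj_on h (N \<union> R)"
    unfolding h_def using f1(1) f2(1) by (rule inj_on_disjoint_Un[rotated 2])
  have V: "V = insert v (N \<union> R)" "v \<notin> N \<union> R"
    using N(1) v by (auto simp: R_def)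
  have low: "h ` (N \<union> R) \<subseteq> {1..l}"
    using f1(2) f2(2) \<open>t < l\<close> by (fastforce simp: h_def)
  then have "2*l \<notin> h ` (N \<union> R)"
    using \<open>t < l\<close> by auto
  then have "inj_on g V"
    unfolding g_def V(1) using inj_h V(2) by (intro inj_on_fun_upd_insert)
  moreover have "g ` (V - {v}) \<subseteq> {1..l}"
    using V low by (auto simp: g_def)
  moreover have "g v = 2*l" "g ` N \<subseteq> {1..t}" "g u = 1" "g w = l"
    using f1(2,3) f2(3) \<open>v \<notin> N\<close> N(3) w by (auto simp: g_def h_def R_def)
  ultimately show thesis
    using that by blast
qed

lemma apex_copy_avoiding_upper_half:
  assumes G: "simple_graph G" and diam: "has_diameter G 2" and size: "card (fst G) \<le> l + 1"
  obtains H0 where "H0 \<in> apex_copies G l (min_degree G) l" "fst H0 \<subseteq> {1..l} \<union> {2*l}"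
    "{l, 1} \<in> snd H0"
proof -
  have fin: "finite (fst G)"
    using G by (simp add: simple_graph_def)
  obtain v w where v: "v \<in> fst G" "degree G v = min_degree G"
    and w: "w \<in> fst G" "w \<noteq> v" "\<not> adj G v w"
    using min_degree_vertex_non_adjacent[OF G diam] .
  obtain u where u: "u \<in> fst G" "adj G v u" "adj G u w"
    using has_diameter_2_common_neighbour[OF diam fin v(1) w(1)] w(2,3) by metis
  define N where "N = {x \<in> fst G. adj G v x}"
  have "N \<subseteq> fst G - {v}" "card N = min_degree G" "u \<in> N" "w \<in> fst G - insert v N"
    using v w u simple_graph_adjD(3)[OF G] by (auto simp: N_def degree_def)
  then obtain g where inj: "inj_on g (fst G)" and gv: "g v = 2*l"
    and nbrs: "g ` N \<subseteq> {1..min_degree G}" and low: "g ` (fst G - {v}) \<subseteq> {1..l}"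
    and uw: "g u = 1" "g w = l"
    using inj_labelling[OF fin v(1) _ _ _ _ size] by metis
  have "0 < l"
    using min_degree_add_2_le_card[OF G diam] size by linarith
  define H0 where "H0 = map_graph g G"
  have "g x \<in> {1..min_degree G}" if "adj G v x" for x
    using nbrs that simple_graph_adjD(2)[OF G that] by (auto simp: N_def)
  then have "subgraph H0 (F_graph l (min_degree G))"
    unfolding H0_def using subgraph_F_graph_map_graph[OF G v(1) inj \<open>0 < l\<close> gv _ low] by blast
  moreover have "isomorphic H0 G"
    unfolding H0_def using isomorphic_map_graph[OF inj simple_graph_edges_subset[OF G]] .
  moreover have "l \<in> fst H0" "2*l \<in> fst H0"
    unfolding H0_def map_graph_def fst_conv using uw(2) gv v(1) w(1) by (metis image_eqI)+
  moreover have "fst H0 \<subseteq> {1..l} \<union> {2*l}"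
    unfolding H0_def map_graph_def fst_conv using low gv by auto
  moreover have "g ` {u, w} \<in> snd H0"
    unfolding H0_def map_graph_def snd_conv using u(3) by (intro imageI) (simp add: adj_def)
  then have "{l, 1} \<in> snd H0"
    using uw by (simp add: insert_commute)
  ultimately show thesis
    using that[of H0] by (simp add: apex_copies_def)
qed

theorem lemma11:
  fixes F :: "'a graph" and l :: nat
  assumes "simple_graph F"
    and "has_diameter F 2"
    and "min_degree F \<ge> 2"
    and "l > card (fst F)"
  shows "\<forall>i \<in> {l+1..l + min_degree F - 1}.
           int (F_degree F (F_graph l (min_degree F)) i) - int (F_degree F (A_graph l) i)
         < int (F_degree F (F_graph l (min_degree F)) l) - int (F_degree F (A_graph l) l)"
proof
  \<comment> \<open>Only l < i < 2l is used below.\<close>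
  fix i assume i: "i \<in> {l+1..l + min_degree F - 1}"
  let ?t = "min_degree F"
  have "?t + 2 \<le> card (fst F)"
    by (rule min_degree_add_2_le_card[OF assms(1,2)])
  then have "?t < l" "0 < l" and "card (fst F) \<le> l + 1"
    using assms(4) by linarith+
  then have "l < i" "i < 2*l"
    using i by auto
  obtain H0 where H0: "H0 \<in> apex_copies F l ?t l" "fst H0 \<subseteq> {1..l} \<union> {2*l}" "{l, 1} \<in> snd H0"
    using apex_copy_avoiding_upper_half[OF assms(1,2) \<open>card (fst F) \<le> l + 1\<close>] .
  then have "i \<notin> fst H0"
    using \<open>l < i\<close> \<open>i < 2*l\<close> by auto
  with H0 have "card (apex_copies F l ?t i) < card (apex_copies F l ?t l)"
    using card_apex_copies_less[OF \<open>?t < l\<close> \<open>l < i\<close> \<open>i < 2*l\<close>] by blast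
  then show "int (F_degree F (F_graph l ?t) i) - int (F_degree F (A_graph l) i)
      < int (F_degree F (F_graph l ?t) l) - int (F_degree F (A_graph l) l)"
    using F_degree_F_graph[OF \<open>0 < l\<close>, of F ?t] by simp
qed

end
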